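(* Let $p\in(0,1)$, $\gamma>0$, $B>0$, $w,N\in\mathbb{N}$, and let $(\xi_1^{(N)*},\dots,\xi_N^{(N)*})$ be the unique maximizer of $\mathcal{T}_N$. Then its effective length is $N$, i.e. $\xi_N^{(N)*}>0$.
   Context: Logarithms are base 2. For an admissible (nonnegative, with sum at most $B$) sequence $(x_j)_{j\ge1}$, $$\mathcal{T}_\infty(x_1,x_2,\dots)=\sum_{k=1}^{w}p^2(1-p)^{k-1}\frac{k}{2}\log_2\!\Big(1+\gamma\frac{B}{k}\Big)+\sum_{j=1}^{\infty}p(1-p)^{j+w-1}\frac12\log_2(1+\gamma x_j)+\sum_{k=1}^{\infty}p^2(1-p)^{k+w-1}\frac{w}{2}\log_2\!\Big(1+\gamma\frac{B-\sum_{j=1}^{k}x_j}{w}\Big).$$ For $N\in\mathbb{N}$ and $\xi_1,\dots,\xi_N\ge0$ with $\sum_{j=1}^N\xi_j\le B$, define $\mathcal{T}_N(\xi_1,\dots,\xi_N)=\mathcal{T}_\infty(\xi_1,\dots,\xi_N,0,0,\dots)$. $\mathcal{T}_N$ has a unique maximizer over this compact set, denoted $(\xi_j^{(N)*})_{j=1}^N$. The effective length of a finite sequence is the largest index $J$ with $\xi_J>0$ (all later entries being zero). *)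

theory Defs
  imports "HOL-Analysis.Analysis"
begin

text \<open>Sequences are functions nat => real indexed from 1 (the value at 0 is ignored).\<close>

definition T_inf :: "real \<Rightarrow> real \<Rightarrow> real \<Rightarrow> nat \<Rightarrow> (nat \<Rightarrow> real) \<Rightarrow> real" where
  "T_inf p \<gamma> B w x =
     (\<Sum>k=1..w. p^2 * (1-p)^(k-1) * (real k / 2) * log 2 (1 + \<gamma> * B / real k))
   + (\<Sum>i. p * (1-p)^(Suc i + w - 1) * (1/2) * log 2 (1 + \<gamma> * x (Suc i)))
   + (\<Sum>i. p^2 * (1-p)^(Suc i + w - 1) * (real w / 2)
            * log 2 (1 + \<gamma> * (B - (\<Sum>j=1..Suc i. x j)) / real w))"

definition T_N :: "real \<Rightarrow> real \<Rightarrow> real \<Rightarrow> nat \<Rightarrow> nat \<Rightarrow> (nat \<Rightarrow> real) \<Rightarrow> real" where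
  "T_N p \<gamma> B w N \<xi> = T_inf p \<gamma> B w (\<lambda>j. if j \<le> N then \<xi> j else 0)"

definition feasible_N :: "real \<Rightarrow> nat \<Rightarrow> (nat \<Rightarrow> real) \<Rightarrow> bool" where
  "feasible_N B N \<xi> \<longleftrightarrow> (\<forall>j\<in>{1..N}. \<xi> j \<ge> 0) \<and> (\<Sum>j=1..N. \<xi> j) \<le> B"

end

theory Submission
  imports Defs
begin

text \<open>
  Beyond index N the remaining budget is frozen, so the budget series of T_N has a geometric
  tail and T_N is a finite sum of concave logarithms in the entries of the sequence. Suppose a
  maximizer had last entry 0. If some budget is left over, putting a little mass on the last
  entry gains weight N at unit marginal rate and loses only weight N / (1 + \<gamma> R / w) in the
  final budget term. If the budget is exhausted, move a little mass from the last positive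
  entry m to N: the budget terms between m and N sit at zero remaining budget and their
  weights telescope, so the net one-sided derivative is proportional to
  weight m - weight m / (1 + \<gamma> \<xi>_m) > 0. Either way a feasible direction of ascent
  contradicts maximality.
\<close>

lemma sums_eventually_geometric:
  fixes f :: "nat \<Rightarrow> real"
  assumes "\<And>i. f (i + n) = c * q ^ i" "\<bar>q\<bar> < 1"
  shows "f sums ((\<Sum>i<n. f i) + c / (1 - q))"
proof -
  have "(\<lambda>i. f (i + n)) sums (c * (1 / (1 - q)))"
    unfolding assms(1) using assms(2) by (intro sums_mult geometric_sums) simp
  then show ?thesis by (simp add: sums_iff_shift add.commute)
qed

definition weight :: "real \<Rightarrow> nat \<Rightarrow> nat \<Rightarrow> real" where
  "weight p w j = p * (1 - p) ^ (j + w - 1) / 2"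

lemma weight_pos: "0 < p \<Longrightarrow> p < 1 \<Longrightarrow> weight p w j > 0"
  unfolding weight_def by simp

lemma weight_telescope:
  assumes "w \<ge> 1"
  shows "weight p w k - weight p w (Suc k) = p * weight p w k"
proof -
  obtain v where "w = Suc v" using assms by (cases w) auto
  then show ?thesis unfolding weight_def by (simp add: field_simps)
qed

lemma sum_weight_telescope:
  assumes "w \<ge> 1" "m \<le> n"
  shows "(\<Sum>k=m..<n. p * weight p w k) = weight p w m - weight p w n"
proof -
  have "(\<Sum>k=m..<n. p * weight p w k) = - (\<Sum>k=m..<n. weight p w (Suc k) - weight p w k)"
    by (simp add: weight_telescope[OF assms(1), symmetric] sum_negf[symmetric])
  then show ?thesis
    using sum_Suc_diff'[OF assms(2), of "weight p w"] by simp
qed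

definition T_N_var :: "real \<Rightarrow> real \<Rightarrow> real \<Rightarrow> nat \<Rightarrow> nat \<Rightarrow> (nat \<Rightarrow> real) \<Rightarrow> real" where
  "T_N_var p \<gamma> B w N \<xi> =
     (\<Sum>j=1..N. weight p w j * log 2 (1 + \<gamma> * \<xi> j))
   + (\<Sum>k=1..<N. p * w * weight p w k * log 2 (1 + \<gamma> * (B - (\<Sum>j=1..k. \<xi> j)) / w))
   + w * weight p w N * log 2 (1 + \<gamma> * (B - (\<Sum>j=1..N. \<xi> j)) / w)"

lemma sum_truncated:
  fixes n N :: nat
  shows "(\<Sum>j=1..n. if j \<le> N then \<xi> j else 0) = (\<Sum>j=1..min n N. \<xi> j :: real)"
proof -
  have "(\<Sum>j=1..n. if j \<le> N then \<xi> j else 0) = (\<Sum>j\<in>{j\<in>{1..n}. j \<le> N}. \<xi> j)"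
    by (subst sum.inter_filter) auto
  also have "{j\<in>{1..n}. j \<le> N} = {1..min n N}" by auto
  finally show ?thesis .
qed

lemma suminf_rate_terms:
  "(\<Sum>i. p * (1-p)^(Suc i + w - 1) * (1/2) * log 2 (1 + \<gamma> * (if Suc i \<le> N then \<xi> (Suc i) else 0)))
     = (\<Sum>j=1..N. weight p w j * log 2 (1 + \<gamma> * \<xi> j))"
  (is "(\<Sum>i. ?F i) = _")
proof -
  have "(\<Sum>i. ?F i) = (\<Sum>i<N. ?F i)"
    by (rule suminf_finite) auto
  also have "\<dots> = (\<Sum>i<N. weight p w (Suc i) * log 2 (1 + \<gamma> * \<xi> (Suc i)))"
    by (intro sum.cong) (auto simp: weight_def)
  also have "\<dots> = (\<Sum>j=1..N. weight p w j * log 2 (1 + \<gamma> * \<xi> j))"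
    by (rule sum_bounds_lt_plus1)
  finally show ?thesis .
qed

lemma suminf_budget_terms:
  assumes "0 < p" "p < 1" "N \<ge> 1"
  shows "(\<Sum>i. p^2 * (1-p)^(Suc i + w - 1) * (real w / 2)
            * log 2 (1 + \<gamma> * (B - (\<Sum>j=1..Suc i. if j \<le> N then \<xi> j else 0)) / real w))
   = (\<Sum>k=1..<N. p * w * weight p w k * log 2 (1 + \<gamma> * (B - (\<Sum>j=1..k. \<xi> j)) / w))
     + w * weight p w N * log 2 (1 + \<gamma> * (B - (\<Sum>j=1..N. \<xi> j)) / w)"
  (is "(\<Sum>i. ?H i) = (\<Sum>k=1..<N. ?b k) + ?c")
proof -
  have "?H (i + (N - 1)) = (p * ?c) * (1 - p) ^ i" for i
  proof -
    have "Suc (i + (N - 1)) + w - 1 = (N + w - 1) + i" using assms by simp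
    then have "(1 - p) ^ (Suc (i + (N - 1)) + w - 1) = (1 - p) ^ (N + w - 1) * (1 - p) ^ i"
      by (simp only: power_add)
    moreover have "min (Suc (i + (N - 1))) N = N" using assms by simp
    ultimately show ?thesis
      unfolding weight_def sum_truncated by (simp add: power2_eq_square)
  qed
  then have "?H sums ((\<Sum>i<N - 1. ?H i) + p * ?c / (1 - (1 - p)))"
    using assms by (intro sums_eventually_geometric) auto
  moreover have "(\<Sum>i<N - 1. ?H i) = (\<Sum>k=1..<N. ?b k)"
  proof -
    have "(\<Sum>i<N - 1. ?H i) = (\<Sum>i<N - 1. ?b (Suc i))"
      by (intro sum.cong) (auto simp: sum_truncated weight_def power2_eq_square)
    also have "\<dots> = (\<Sum>k=1..N - 1. ?b k)"
      by (rule sum_bounds_lt_plus1)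
    also have "{1..N - 1} = {1..<N}"
      using assms by auto
    finally show ?thesis .
  qed
  ultimately show ?thesis
    using assms by (simp add: sums_iff)
qed

lemma T_N_eq_T_N_var:
  assumes "0 < p" "p < 1" "N \<ge> 1"
  shows "T_N p \<gamma> B w N \<xi> =
           (\<Sum>k=1..w. p^2 * (1-p)^(k-1) * (real k / 2) * log 2 (1 + \<gamma> * B / real k))
         + T_N_var p \<gamma> B w N \<xi>"
  unfolding T_N_def T_inf_def T_N_var_def suminf_rate_terms suminf_budget_terms[OF assms] by simp

lemma DERIV_log_affine:
  fixes \<alpha> \<beta> :: real
  assumes "\<alpha> > 0"
  shows "((\<lambda>e. log 2 (\<alpha> + \<beta> * e)) has_real_derivative \<beta> / (\<alpha> * ln 2)) (at 0)"
proof -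
  have "((\<lambda>e. \<alpha> + \<beta> * e) has_real_derivative \<beta>) (at 0)"
    by (auto intro!: derivative_eq_intros)
  moreover have "DERIV (log 2) (\<alpha> + \<beta> * 0) :> 1 / (ln 2 * (\<alpha> + \<beta> * 0))"
    using assms by (intro DERIV_log) simp
  ultimately show ?thesis
    using DERIV_chain' by (fastforce simp: mult.commute)
qed

lemma feasible_N_partial_sum_le:
  assumes "feasible_N B N \<xi>" "k \<le> N"
  shows "(\<Sum>j=1..k. \<xi> j) \<le> B"
proof -
  have "(\<Sum>j=1..k. \<xi> j) \<le> (\<Sum>j=1..N. \<xi> j)"
    using assms unfolding feasible_N_def by (intro sum_mono2) auto
  then show ?thesis
    using assms unfolding feasible_N_def by simp
qed

definition T_N_slope :: "real \<Rightarrow> real \<Rightarrow> real \<Rightarrow> nat \<Rightarrow> nat \<Rightarrow> (nat \<Rightarrow> real) \<Rightarrow> (nat \<Rightarrow> real) \<Rightarrow> real" where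
  "T_N_slope p \<gamma> B w N \<xi> d =
     (\<Sum>j=1..N. weight p w j * d j / (1 + \<gamma> * \<xi> j))
   - (\<Sum>k=1..<N. p * weight p w k * (\<Sum>j=1..k. d j) / (1 + \<gamma> * (B - (\<Sum>j=1..k. \<xi> j)) / w))
   - weight p w N * (\<Sum>j=1..N. d j) / (1 + \<gamma> * (B - (\<Sum>j=1..N. \<xi> j)) / w)"

lemma T_N_var_has_directional_derivative:
  fixes \<xi> d :: "nat \<Rightarrow> real"
  assumes "\<gamma> > 0" "w \<ge> 1" "feasible_N B N \<xi>"
  shows "((\<lambda>e. T_N_var p \<gamma> B w N (\<lambda>j. \<xi> j + e * d j)) has_real_derivative
           \<gamma> / ln 2 * T_N_slope p \<gamma> B w N \<xi> d) (at 0)"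
proof -
  define u where "u k = 1 + \<gamma> * (B - (\<Sum>j=1..k. \<xi> j)) / w" for k
  define v where "v k = - \<gamma> / w * (\<Sum>j=1..k. d j)" for k
  have w_pos: "real w > 0" using assms(2) by simp
  have u_pos: "u k > 0" if "k \<le> N" for k
    using feasible_N_partial_sum_le[OF assms(3) that] assms(1) w_pos unfolding u_def
    by (simp add: add_pos_nonneg)
  have \<xi>_pos: "1 + \<gamma> * \<xi> j > 0" if "j \<in> {1..N}" for j
    using assms(1,3) that unfolding feasible_N_def by (simp add: add_pos_nonneg)
  have budget: "1 + \<gamma> * (B - (\<Sum>j=1..k. \<xi> j + e * d j)) / w = u k + v k * e" for k e
    unfolding u_def v_def using w_pos
    by (simp add: sum.distrib sum_distrib_left[symmetric] field_simps)
  have rate: "1 + \<gamma> * (\<xi> j + e * d j) = (1 + \<gamma> * \<xi> j) + (\<gamma> * d j) * e" for j e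
    by (simp add: algebra_simps)
  have "((\<lambda>e. T_N_var p \<gamma> B w N (\<lambda>j. \<xi> j + e * d j)) has_real_derivative
      (\<Sum>j=1..N. weight p w j * (\<gamma> * d j / ((1 + \<gamma> * \<xi> j) * ln 2)))
    + (\<Sum>k=1..<N. p * w * weight p w k * (v k / (u k * ln 2)))
    + w * weight p w N * (v N / (u N * ln 2))) (at 0)"
    unfolding T_N_var_def budget rate using u_pos \<xi>_pos
    by (intro DERIV_add DERIV_sum DERIV_cmult DERIV_log_affine) auto
  moreover have "(\<Sum>j=1..N. weight p w j * (\<gamma> * d j / ((1 + \<gamma> * \<xi> j) * ln 2)))
      = \<gamma> / ln 2 * (\<Sum>j=1..N. weight p w j * d j / (1 + \<gamma> * \<xi> j))"
    by (simp add: sum_distrib_left mult_ac)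
  moreover have "(\<Sum>k=1..<N. p * w * weight p w k * (v k / (u k * ln 2)))
      = - (\<gamma> / ln 2 * (\<Sum>k=1..<N. p * weight p w k * (\<Sum>j=1..k. d j) / u k))"
    unfolding sum_distrib_left[of "\<gamma> / ln 2" "\<lambda>k. p * weight p w k * (\<Sum>j=1..k. d j) / u k"]
      sum_negf[symmetric]
    using w_pos by (intro sum.cong) (auto simp: v_def mult_ac)
  moreover have "w * weight p w N * (v N / (u N * ln 2))
      = - (\<gamma> / ln 2 * (weight p w N * (\<Sum>j=1..N. d j) / u N))"
    unfolding v_def using w_pos by (simp add: mult_ac)
  ultimately show ?thesis
    unfolding T_N_slope_def u_def[symmetric] by (simp add: algebra_simps)
qed

lemma DERIV_nonpos_at_right_max:
  fixes \<phi> :: "real \<Rightarrow> real"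
  assumes "(\<phi> has_real_derivative D) (at 0)" "r > 0" "\<And>e. 0 < e \<Longrightarrow> e \<le> r \<Longrightarrow> \<phi> e \<le> \<phi> 0"
  shows "D \<le> 0"
proof (rule ccontr)
  assume "\<not> D \<le> 0"
  then obtain \<delta> where "\<delta> > 0" "\<And>h. 0 < h \<Longrightarrow> h < \<delta> \<Longrightarrow> \<phi> 0 < \<phi> (0 + h)"
    using DERIV_pos_inc_right[OF assms(1)] by force
  then have "\<phi> 0 < \<phi> (min (\<delta> / 2) r)"
    using assms(2) by simp
  then show False
    using assms(2) assms(3)[of "min (\<delta> / 2) r"] \<open>\<delta> > 0\<close> by simp
qed

definition T_N_maximizer :: "real \<Rightarrow> real \<Rightarrow> real \<Rightarrow> nat \<Rightarrow> nat \<Rightarrow> (nat \<Rightarrow> real) \<Rightarrow> bool" where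
  "T_N_maximizer p \<gamma> B w N \<xi> \<longleftrightarrow>
     feasible_N B N \<xi> \<and> (\<forall>\<eta>. feasible_N B N \<eta> \<longrightarrow> T_N p \<gamma> B w N \<eta> \<le> T_N p \<gamma> B w N \<xi>)"

lemma T_N_slope_nonpos_at_maximizer:
  assumes "0 < p" "p < 1" "\<gamma> > 0" "w \<ge> 1" "N \<ge> 1" "T_N_maximizer p \<gamma> B w N \<xi>"
    and "r > 0" "\<And>e. 0 < e \<Longrightarrow> e \<le> r \<Longrightarrow> feasible_N B N (\<lambda>j. \<xi> j + e * d j)"
  shows "T_N_slope p \<gamma> B w N \<xi> d \<le> 0"
proof -
  have "\<gamma> / ln 2 * T_N_slope p \<gamma> B w N \<xi> d \<le> 0"
  proof (rule DERIV_nonpos_at_right_max[OF T_N_var_has_directional_derivative \<open>r > 0\<close>])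
    fix e :: real
    assume "0 < e" "e \<le> r"
    then have "T_N p \<gamma> B w N (\<lambda>j. \<xi> j + e * d j) \<le> T_N p \<gamma> B w N \<xi>"
      using assms(6,8) unfolding T_N_maximizer_def by blast
    then show "T_N_var p \<gamma> B w N (\<lambda>j. \<xi> j + e * d j) \<le> T_N_var p \<gamma> B w N (\<lambda>j. \<xi> j + 0 * d j)"
      using assms(1,2,5) by (simp add: T_N_eq_T_N_var)
  qed (use assms in \<open>auto simp: T_N_maximizer_def\<close>)
  then show ?thesis
    using assms(3) by (auto simp: divide_le_0_iff mult_le_0_iff)
qed

lemma T_N_slope_fill_last:
  assumes "N \<ge> 1" "\<xi> N = 0"
  shows "T_N_slope p \<gamma> B w N \<xi> (\<lambda>j. if j = N then 1 else 0)
           = weight p w N - weight p w N / (1 + \<gamma> * (B - (\<Sum>j=1..N. \<xi> j)) / w)"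
proof -
  have "(\<Sum>j=1..N. weight p w j * (if j = N then 1 else 0) / (1 + \<gamma> * \<xi> j))
      = (\<Sum>j=1..N. if j = N then weight p w N else 0)"
    by (intro sum.cong) (auto simp: assms(2))
  then show ?thesis
    unfolding T_N_slope_def using assms(1) by simp
qed

lemma T_N_slope_transfer_to_last:
  assumes "w \<ge> 1" "1 \<le> m" "m < N" "\<forall>j\<in>{m<..N}. \<xi> j = 0" "(\<Sum>j=1..N. \<xi> j) = B"
  defines "d j \<equiv> (if j = N then 1 else 0) - (if j = m then 1 else 0 :: real)"
  shows "T_N_slope p \<gamma> B w N \<xi> d = weight p w m - weight p w m / (1 + \<gamma> * \<xi> m)"
proof -
  have exhausted: "(\<Sum>j=1..k. \<xi> j) = B" if "m \<le> k" "k \<le> N" for k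
  proof -
    have "\<forall>i\<in>{1..N} - {1..k}. \<xi> i = 0"
      using assms(4) that by auto
    then show ?thesis
      using assms(5) sum.mono_neutral_left[of "{1..N}" "{1..k}" \<xi>] that by auto
  qed
  have sum_d: "(\<Sum>j=1..k. d j) = (if N \<le> k then 1 else 0) - (if m \<le> k then 1 else 0)" for k
    using assms(2,3) unfolding d_def by (simp add: sum_subtractf)
  have "(\<Sum>j=1..N. weight p w j * d j / (1 + \<gamma> * \<xi> j))
      = (\<Sum>j=1..N. (if j = N then weight p w N else 0)
                   - (if j = m then weight p w m / (1 + \<gamma> * \<xi> m) else 0))"
    using assms(3,4) by (intro sum.cong) (auto simp: d_def)
  moreover have "(\<Sum>k=1..<N. p * weight p w k * (\<Sum>j=1..k. d j) / (1 + \<gamma> * (B - (\<Sum>j=1..k. \<xi> j)) / w))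
      = (\<Sum>k=1..<N. if m \<le> k then - (p * weight p w k) else 0)"
    by (intro sum.cong) (auto simp: sum_d[simplified] exhausted[simplified])
  moreover have "\<dots> = - (\<Sum>k\<in>{k\<in>{1..<N}. m \<le> k}. p * weight p w k)"
    unfolding sum.inter_filter[OF finite_atLeastLessThan] sum_negf[symmetric] by (intro sum.cong) auto
  moreover have "{k\<in>{1..<N}. m \<le> k} = {m..<N}"
    using assms(2) by auto
  ultimately show ?thesis
    unfolding T_N_slope_def sum_d
    using sum_weight_telescope[OF assms(1) less_imp_le[OF assms(3)], of p] assms(2,3)
    by (simp add: sum_subtractf)
qed

lemma T_N_maximizer_exhausts_budget:
  assumes "0 < p" "p < 1" "\<gamma> > 0" "w \<ge> 1" "N \<ge> 1" "T_N_maximizer p \<gamma> B w N \<xi>" "\<xi> N = 0"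
  shows "(\<Sum>j=1..N. \<xi> j) = B"
proof (rule ccontr)
  define R where "R = B - (\<Sum>j=1..N. \<xi> j)"
  have feasible: "feasible_N B N \<xi>"
    using assms(6) unfolding T_N_maximizer_def by simp
  assume "(\<Sum>j=1..N. \<xi> j) \<noteq> B"
  then have "R > 0"
    using feasible unfolding feasible_N_def R_def by simp
  have "T_N_slope p \<gamma> B w N \<xi> (\<lambda>j. if j = N then 1 else 0) \<le> 0"
  proof (rule T_N_slope_nonpos_at_maximizer[OF assms(1-6) \<open>R > 0\<close>])
    fix e :: real
    assume "0 < e" "e \<le> R"
    then show "feasible_N B N (\<lambda>j. \<xi> j + e * (if j = N then 1 else 0))"
      using feasible assms(5) unfolding feasible_N_def R_def
      by (auto simp: sum.distrib sum_distrib_left[symmetric])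
  qed
  moreover have "1 + \<gamma> * R / w > 1"
    using assms(3,4) \<open>R > 0\<close> by simp
  ultimately show False
    using weight_pos[OF assms(1,2)] T_N_slope_fill_last[of N \<xi>, OF assms(5,7)]
    unfolding R_def by (simp add: le_divide_eq)
qed

lemma T_N_maximizer_last_positive_entry:
  assumes "0 < p" "p < 1" "\<gamma> > 0" "w \<ge> 1" "T_N_maximizer p \<gamma> B w N \<xi>"
    and "(\<Sum>j=1..N. \<xi> j) = B" "m \<in> {1..N}" "\<xi> m > 0" "\<forall>j\<in>{m<..N}. \<xi> j \<le> 0"
  shows "m = N"
proof (rule ccontr)
  define d where "d j = (if j = N then 1 else 0) - (if j = m then 1 else 0 :: real)" for j
  have feasible: "feasible_N B N \<xi>"
    using assms(5) unfolding T_N_maximizer_def by simp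
  assume "m \<noteq> N"
  with assms(7) have m: "1 \<le> m" "m < N" by auto
  have "\<forall>j\<in>{m<..N}. \<xi> j = 0"
  proof
    fix j
    assume j: "j \<in> {m<..N}"
    then have "\<xi> j \<ge> 0"
      using feasible m unfolding feasible_N_def by simp
    then show "\<xi> j = 0"
      using assms(9) j by force
  qed
  then have slope: "T_N_slope p \<gamma> B w N \<xi> d = weight p w m - weight p w m / (1 + \<gamma> * \<xi> m)"
    unfolding d_def by (rule T_N_slope_transfer_to_last[OF assms(4) m _ assms(6)])
  have "T_N_slope p \<gamma> B w N \<xi> d \<le> 0"
  proof (rule T_N_slope_nonpos_at_maximizer[OF assms(1-4) _ assms(5,8)])
    fix e :: real
    assume "0 < e" "e \<le> \<xi> m"
    then show "feasible_N B N (\<lambda>j. \<xi> j + e * d j)"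
      using feasible m unfolding feasible_N_def d_def
      by (auto simp: sum.distrib sum_subtractf sum_distrib_left[symmetric])
  qed (use m in simp)
  moreover have "1 + \<gamma> * \<xi> m > 1"
    using assms(3,8) by simp
  ultimately show False
    using weight_pos[OF assms(1,2)] slope by (simp add: le_divide_eq)
qed

lemma last_positive_index:
  fixes x :: "nat \<Rightarrow> 'a::{ordered_comm_monoid_add, linorder}"
  assumes "(\<Sum>j=1..N. x j) > 0"
  obtains m where "m \<in> {1..N}" "x m > 0" "\<forall>j\<in>{m<..N}. x j \<le> 0"
proof -
  define P where "P = {j\<in>{1..N}. x j > 0}"
  have "finite P"
    unfolding P_def by simp
  moreover have "P \<noteq> {}"
  proof
    assume "P = {}"
    then have "(\<Sum>j=1..N. x j) \<le> 0"
      unfolding P_def by (intro sum_nonpos) auto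
    then show False
      using assms by simp
  qed
  ultimately have "Max P \<in> P" "\<forall>j\<in>P. j \<le> Max P"
    by simp_all
  then show ?thesis
  proof (intro that)
    show "Max P \<in> {1..N}" "x (Max P) > 0"
      using \<open>Max P \<in> P\<close> unfolding P_def by auto
    show "\<forall>j\<in>{Max P<..N}. x j \<le> 0"
    proof
      fix j
      assume j: "j \<in> {Max P<..N}"
      then have "j \<notin> P"
        using \<open>\<forall>j\<in>P. j \<le> Max P\<close> by auto
      moreover have "j \<in> {1..N}"
        using j \<open>Max P \<in> P\<close> unfolding P_def by auto
      ultimately show "x j \<le> 0"
        unfolding P_def by (simp add: not_less)
    qed
  qed
qed

theorem lemma3:
  fixes p \<gamma> B :: real and w N :: nat and \<xi> :: "nat \<Rightarrow> real"
  assumes "0 < p" "p < 1" "\<gamma> > 0" "B > 0" "w \<ge> 1" "N \<ge> 1"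
    and "feasible_N B N \<xi>"
    and "\<forall>\<eta>. feasible_N B N \<eta> \<longrightarrow> T_N p \<gamma> B w N \<eta> \<le> T_N p \<gamma> B w N \<xi>"
  shows "\<xi> N > 0"
proof (rule ccontr)
  assume "\<not> \<xi> N > 0"
  then have "\<xi> N = 0"
    using assms(6,7) unfolding feasible_N_def by force
  have maximizer: "T_N_maximizer p \<gamma> B w N \<xi>"
    using assms(7,8) unfolding T_N_maximizer_def by blast
  have exhausted: "(\<Sum>j=1..N. \<xi> j) = B"
    using T_N_maximizer_exhausts_budget[OF assms(1-3,5,6) maximizer \<open>\<xi> N = 0\<close>] .
  then obtain m where "m \<in> {1..N}" "\<xi> m > 0" "\<forall>j\<in>{m<..N}. \<xi> j \<le> 0"
    using last_positive_index[of \<xi> N] assms(4) by auto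
  then have "m = N"
    using T_N_maximizer_last_positive_entry[OF assms(1-3,5) maximizer exhausted] by blast
  then show False
    using \<open>\<xi> m > 0\<close> \<open>\<xi> N = 0\<close> by simp
qed

end
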